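(* Let $C$ be a connected rack that is finitely generated (but not necessarily finite). Then the assignment $R\mapsto|\mathrm{Mor}_{\mathcal{R}}(C,R)|$, sending a finite rack $R$ to the number of rack morphisms $C\to R$, is an additive invariant of finite racks, and the induced map $$\Phi_C\colon\mathrm{B}(\mathcal{R})\longrightarrow\mathbb{Z},\qquad b(R)\mapsto|\mathrm{Mor}_{\mathcal{R}}(C,R)|,$$ is a homomorphism of commutative rings.
   Context: A rack is a set $R$ with a binary operation $\rhd$ such that every left multiplication $\ell_a\colon b\mapsto a\rhd b$ is a bijection and $a\rhd(b\rhd c)=(a\rhd b)\rhd(a\rhd c)$ for all $a,b,c$; morphisms preserve $\rhd$. The inner automorphism group $\mathrm{Inn}(R)$ is the subgroup of the symmetric group on $R$ generated by all $\ell_a$; a rack is connected if it is non-empty and $\mathrm{Inn}(R)$ acts transitively on $R$. A subrack is a subset $S$ with $\ell_s(S)=S$ for all $s\in S$; a decomposition of $R$ into $S$ and $T$ means $S,T$ are disjoint subracks (possibly empty) with $S\cup T=R$. An additive invariant of finite racks with values in an abelian group $A$ is an assignment $R\mapsto a(R)\in A$ on finite racks with $a(R_1)=a(R_2)$ whenever $R_1\cong R_2$ and $a(R)=a(S)+a(T)$ whenever $R$ decomposes into $S$ and $T$. The Burnside ring of finite racks $\mathrm{B}(\mathcal{R})$ is the abelian group generated by symbols $b(R)$, one for each finite rack $R$, subject to $b(R_1)=b(R_2)$ whenever $R_1\cong R_2$ and $b(R)=b(S)+b(T)$ whenever $R$ decomposes into $S$ and $T$, with ring structure $b(R)b(R')=b(R\times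 R')$ (cartesian product, componentwise operation) and unit the class of the singleton. *)

theory Defs
  imports "HOL-Algebra.Bij" "HOL-Algebra.Generated_Groups"
begin

definition rack :: "'a set \<Rightarrow> ('a \<Rightarrow> 'a \<Rightarrow> 'a) \<Rightarrow> bool" where
  "rack A r \<longleftrightarrow> (\<forall>a\<in>A. bij_betw (r a) A A) \<and>
     (\<forall>a\<in>A. \<forall>b\<in>A. \<forall>c\<in>A. r a (r b c) = r (r a b) (r a c))"

definition left_mult :: "'a set \<Rightarrow> ('a \<Rightarrow> 'a \<Rightarrow> 'a) \<Rightarrow> 'a \<Rightarrow> ('a \<Rightarrow> 'a)" where
  "left_mult A r a = restrict (r a) A"

definition Inn :: "'a set \<Rightarrow> ('a \<Rightarrow> 'a \<Rightarrow> 'a) \<Rightarrow> ('a \<Rightarrow> 'a) set" where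
  "Inn A r = generate (BijGroup A) (left_mult A r ` A)"

definition connected_rack :: "'a set \<Rightarrow> ('a \<Rightarrow> 'a \<Rightarrow> 'a) \<Rightarrow> bool" where
  "connected_rack A r \<longleftrightarrow> rack A r \<and> A \<noteq> {} \<and>
     (\<forall>x\<in>A. \<forall>y\<in>A. \<exists>\<sigma>\<in>Inn A r. \<sigma> x = y)"

definition subrack :: "'a set \<Rightarrow> ('a \<Rightarrow> 'a \<Rightarrow> 'a) \<Rightarrow> 'a set \<Rightarrow> bool" where
  "subrack A r S \<longleftrightarrow> S \<subseteq> A \<and> (\<forall>s\<in>S. r s ` S = S)"

definition generated_subrack :: "'a set \<Rightarrow> ('a \<Rightarrow> 'a \<Rightarrow> 'a) \<Rightarrow> 'a set \<Rightarrow> 'a set" where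
  "generated_subrack A r G = \<Inter>{S. subrack A r S \<and> G \<subseteq> S}"

definition finitely_generated_rack :: "'a set \<Rightarrow> ('a \<Rightarrow> 'a \<Rightarrow> 'a) \<Rightarrow> bool" where
  "finitely_generated_rack A r \<longleftrightarrow>
     (\<exists>G. finite G \<and> G \<subseteq> A \<and> generated_subrack A r G = A)"

definition rack_hom :: "'a set \<Rightarrow> ('a \<Rightarrow> 'a \<Rightarrow> 'a) \<Rightarrow> 'b set \<Rightarrow> ('b \<Rightarrow> 'b \<Rightarrow> 'b) \<Rightarrow> ('a \<Rightarrow> 'b) \<Rightarrow> bool" where
  "rack_hom A r B s h \<longleftrightarrow> h \<in> A \<rightarrow> B \<and> (\<forall>a\<in>A. \<forall>b\<in>A. h (r a b) = s (h a) (h b))"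

definition rack_Mor :: "'a set \<Rightarrow> ('a \<Rightarrow> 'a \<Rightarrow> 'a) \<Rightarrow> 'b set \<Rightarrow> ('b \<Rightarrow> 'b \<Rightarrow> 'b) \<Rightarrow> ('a \<Rightarrow> 'b) set" where
  "rack_Mor A r B s = {h \<in> A \<rightarrow>\<^sub>E B. rack_hom A r B s h}"

definition rack_iso :: "'a set \<Rightarrow> ('a \<Rightarrow> 'a \<Rightarrow> 'a) \<Rightarrow> 'b set \<Rightarrow> ('b \<Rightarrow> 'b \<Rightarrow> 'b) \<Rightarrow> bool" where
  "rack_iso A r B s \<longleftrightarrow> (\<exists>h. bij_betw h A B \<and> rack_hom A r B s h)"

definition rack_decomposition :: "'a set \<Rightarrow> ('a \<Rightarrow> 'a \<Rightarrow> 'a) \<Rightarrow> 'a set \<Rightarrow> 'a set \<Rightarrow> bool" where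
  "rack_decomposition A r S T \<longleftrightarrow> subrack A r S \<and> subrack A r T \<and> S \<inter> T = {} \<and> S \<union> T = A"

definition prod_rack_op :: "('a \<Rightarrow> 'a \<Rightarrow> 'a) \<Rightarrow> ('b \<Rightarrow> 'b \<Rightarrow> 'b) \<Rightarrow> ('a \<times> 'b \<Rightarrow> 'a \<times> 'b \<Rightarrow> 'a \<times> 'b)" where
  "prod_rack_op r s = (\<lambda>(a, b) (c, d). (r a c, s b d))"

definition num_mor :: "'a set \<Rightarrow> ('a \<Rightarrow> 'a \<Rightarrow> 'a) \<Rightarrow> 'b set \<Rightarrow> ('b \<Rightarrow> 'b \<Rightarrow> 'b) \<Rightarrow> int" where
  "num_mor A r B s = int (card (rack_Mor A r B s))"

end

theory Submission
  imports Defs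
begin

(* A morphism h from C to R, together with a decomposition of R into S and T, yields the
   function x |-> (h x in S) on C. It is invariant under the left multiplications of C, because
   left multiplications of R preserve both parts; hence it is invariant under Inn(C), and
   constant since C is connected. So h lands entirely in S or entirely in T, and Mor(C,R) is
   the disjoint union of Mor(C,S) and Mor(C,T). These sets are finite because the equalizer
   of two morphisms is a subrack, so a morphism is determined by its values on a finite
   generating set. Products and the singleton rack are handled by their universal
   properties, and isomorphism invariance by post-composition. *)

lemma rack_closed:
  assumes "rack A r" "a \<in> A" "b \<in> A"
  shows "r a b \<in> A"
  using assms unfolding rack_def by (metis bij_betw_apply)

lemma rack_Mor_iff:
  "h \<in> rack_Mor A r B s \<longleftrightarrow> h \<in> extensional A \<and> rack_hom A r B s h"
  unfolding rack_Mor_def rack_hom_def PiE_def by blast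

lemma restrict_rack_hom:
  assumes "rack A r" "rack_hom A r B s f"
  shows "rack_hom A r B s (restrict f A)"
  using assms rack_closed[OF assms(1)] unfolding rack_hom_def by auto

lemma rack_hom_comp:
  assumes "rack_hom A r B s f" "rack_hom B s D t g"
  shows "rack_hom A r D t (g \<circ> f)"
  using assms unfolding rack_hom_def by (fastforce simp: Pi_iff)

lemma left_mult_in_Bij:
  assumes "rack A r" "a \<in> A"
  shows "left_mult A r a \<in> Bij A"
  using assms unfolding Bij_def left_mult_def rack_def
  by (auto intro: bij_betw_cong[THEN iffD1, rotated])

lemma Inn_preserves_invariant:
  assumes "rack A r"
    and invariant: "\<And>a x. a \<in> A \<Longrightarrow> x \<in> A \<Longrightarrow> f (r a x) = f x"
    and "\<sigma> \<in> Inn A r" "x \<in> A"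
  shows "f (\<sigma> x) = f x"
proof -
  interpret Sym: group "BijGroup A" by (rule group_BijGroup)
  define H where "H = {\<sigma> \<in> Bij A. \<forall>x\<in>A. f (\<sigma> x) = f x}"
  have "subgroup H (BijGroup A)"
  proof (rule Sym.subgroupI)
    show "H \<subseteq> carrier (BijGroup A)" unfolding H_def BijGroup_def by auto
    show "H \<noteq> {}" using id_Bij unfolding H_def by fastforce
  next
    fix \<sigma> assume "\<sigma> \<in> H"
    then have \<sigma>: "\<sigma> \<in> Bij A" "\<forall>x\<in>A. f (\<sigma> x) = f x" unfolding H_def by auto
    have "f (inv_into A \<sigma> x) = f x" if "x \<in> A" for x
    proof -
      have "\<sigma> (inv_into A \<sigma> x) = x"
        using \<sigma>(1) that unfolding Bij_def by (auto intro: bij_betw_inv_into_right)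
      then show ?thesis using \<sigma> Bij_inv_into_mem[OF \<sigma>(1) that] by metis
    qed
    then show "inv\<^bsub>BijGroup A\<^esub> \<sigma> \<in> H"
      unfolding H_def inv_BijGroup[OF \<sigma>(1)] using restrict_inv_into_Bij[OF \<sigma>(1)] by auto
  next
    fix \<sigma> \<tau> assume "\<sigma> \<in> H" "\<tau> \<in> H"
    then have "\<sigma> \<in> Bij A" "\<tau> \<in> Bij A" "\<forall>x\<in>A. f (\<sigma> x) = f x" "\<forall>x\<in>A. f (\<tau> x) = f x"
      unfolding H_def by auto
    then show "\<sigma> \<otimes>\<^bsub>BijGroup A\<^esub> \<tau> \<in> H"
      unfolding H_def BijGroup_def using compose_Bij[of \<sigma> A \<tau>] Bij_imp_funcset[of \<tau> A]
      by (auto simp: compose_eq Pi_iff)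
  qed
  moreover have "left_mult A r ` A \<subseteq> H"
    using left_mult_in_Bij[OF assms(1)] invariant unfolding H_def left_mult_def by auto
  ultimately have "Inn A r \<subseteq> H"
    unfolding Inn_def by (rule Sym.generate_subgroup_incl[rotated])
  then show ?thesis using assms(3,4) unfolding H_def by blast
qed

lemma connected_rack_invariant_const:
  assumes "connected_rack A r"
    and invariant: "\<And>a x. a \<in> A \<Longrightarrow> x \<in> A \<Longrightarrow> f (r a x) = f x"
    and "x \<in> A" "y \<in> A"
  shows "f x = f y"
proof -
  obtain \<sigma> where "\<sigma> \<in> Inn A r" "\<sigma> x = y"
    using assms unfolding connected_rack_def by blast
  moreover have "rack A r" using assms(1) unfolding connected_rack_def by blast
  ultimately show ?thesis using Inn_preserves_invariant[of A r f] invariant assms(3) by metis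
qed

lemma subrack_left_mult_mem_iff:
  assumes "rack A r" "subrack A r S" "s \<in> S" "y \<in> A"
  shows "r s y \<in> S \<longleftrightarrow> y \<in> S"
proof
  have SA: "S \<subseteq> A" and image: "r s ` S = S" using assms(2,3) unfolding subrack_def by auto
  have inj: "inj_on (r s) A" using assms(1,3) SA unfolding rack_def bij_betw_def by blast
  assume "r s y \<in> S"
  then obtain z where z: "z \<in> S" "r s y = r s z" using image by blast
  then have "y = z" using inj_onD[OF inj z(2) assms(4)] SA by blast
  then show "y \<in> S" using z(1) by simp
next
  assume "y \<in> S"
  then show "r s y \<in> S" using assms(2,3) unfolding subrack_def by blast
qed

lemma rack_decomposition_left_mult_mem_iff:
  assumes "rack A r" "rack_decomposition A r S T" "s \<in> A" "y \<in> A"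
  shows "r s y \<in> S \<longleftrightarrow> y \<in> S"
proof -
  have parts: "subrack A r S" "subrack A r T" "S \<inter> T = {}" "S \<union> T = A"
    using assms(2) unfolding rack_decomposition_def by auto
  show ?thesis
  proof (cases "s \<in> S")
    case True
    then show ?thesis using subrack_left_mult_mem_iff[OF assms(1) parts(1) _ assms(4)] by blast
  next
    case False
    then have "s \<in> T" using parts(4) assms(3) by blast
    then have "r s y \<in> T \<longleftrightarrow> y \<in> T"
      using subrack_left_mult_mem_iff[OF assms(1) parts(2) _ assms(4)] by blast
    moreover have "r s y \<in> A" using rack_closed assms(1,3,4) .
    ultimately show ?thesis using parts(3,4) assms(4) by blast
  qed
qed

lemma connected_rack_hom_image_in_part:
  assumes "connected_rack C c" "rack R r" "rack_decomposition R r S T" "rack_hom C c R r h"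
  shows "h ` C \<subseteq> S \<or> h ` C \<subseteq> T"
proof -
  have hom: "h x \<in> R" "h (c a x) = r (h a) (h x)" if "a \<in> C" "x \<in> C" for a x
    using assms(4) that unfolding rack_hom_def by auto
  have same_part: "h x \<in> S \<longleftrightarrow> h y \<in> S" if "x \<in> C" "y \<in> C" for x y
  proof (rule connected_rack_invariant_const[OF assms(1) _ that])
    fix a x assume "a \<in> C" "x \<in> C"
    then show "(h (c a x) \<in> S) = (h x \<in> S)"
      using hom rack_decomposition_left_mult_mem_iff[OF assms(2,3)] by metis
  qed
  obtain x0 where "x0 \<in> C" using assms(1) unfolding connected_rack_def by blast
  then show ?thesis
    using same_part hom(1) assms(3) unfolding rack_decomposition_def by blast
qed

lemma rack_Mor_subset:
  assumes "S \<subseteq> R"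
  shows "rack_Mor C c S r \<subseteq> rack_Mor C c R r"
  using assms unfolding rack_Mor_def rack_hom_def by auto

lemma rack_Mor_restrict_target:
  assumes "h \<in> rack_Mor C c R r" "h ` C \<subseteq> S"
  shows "h \<in> rack_Mor C c S r"
  using assms unfolding rack_Mor_def rack_hom_def by auto

lemma rack_Mor_disjoint:
  assumes "C \<noteq> {}" "S \<inter> T = {}"
  shows "rack_Mor C c S r \<inter> rack_Mor C c T r = {}"
  using assms unfolding rack_Mor_def by fastforce

lemma rack_Mor_decomposition:
  assumes "connected_rack C c" "rack R r" "rack_decomposition R r S T"
  shows "rack_Mor C c R r = rack_Mor C c S r \<union> rack_Mor C c T r"
proof
  show "rack_Mor C c R r \<subseteq> rack_Mor C c S r \<union> rack_Mor C c T r"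
  proof
    fix h assume h: "h \<in> rack_Mor C c R r"
    then have "h ` C \<subseteq> S \<or> h ` C \<subseteq> T"
      using connected_rack_hom_image_in_part[OF assms] unfolding rack_Mor_iff by blast
    then show "h \<in> rack_Mor C c S r \<union> rack_Mor C c T r"
      using rack_Mor_restrict_target[OF h] by blast
  qed
  have "S \<subseteq> R" "T \<subseteq> R" using assms(3) unfolding rack_decomposition_def by auto
  then show "rack_Mor C c S r \<union> rack_Mor C c T r \<subseteq> rack_Mor C c R r"
    using rack_Mor_subset by (metis Un_least)
qed

lemma rack_hom_equalizer_subrack:
  assumes "rack C c" "rack R r" "rack_hom C c R r h" "rack_hom C c R r h'"
  shows "subrack C c {x \<in> C. h x = h' x}"
  unfolding subrack_def
proof (intro conjI ballI subset_antisym)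
  let ?E = "{x \<in> C. h x = h' x}"
  fix s assume s: "s \<in> ?E"
  have hom: "h (c a x) = r (h a) (h x)" "h' (c a x) = r (h' a) (h' x)" "h x \<in> R" "h' x \<in> R"
    if "a \<in> C" "x \<in> C" for a x
    using assms(3,4) that unfolding rack_hom_def by auto
  show "c s ` ?E \<subseteq> ?E" using s hom rack_closed[OF assms(1)] by auto
  show "?E \<subseteq> c s ` ?E"
  proof
    fix t assume t: "t \<in> ?E"
    have "c s ` C = C" using assms(1) s unfolding rack_def bij_betw_def by blast
    then obtain u where u: "u \<in> C" "t = c s u" using t by blast
    have "inj_on (r (h s)) R" using assms(2) hom(3) s unfolding rack_def bij_betw_def by blast
    moreover have "r (h s) (h u) = r (h s) (h' u)" using hom(1,2) s t u by auto
    ultimately have "h u = h' u" using hom(3,4) s u by (blast dest: inj_onD)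
    then show "t \<in> c s ` ?E" using u by blast
  qed
qed auto

lemma rack_hom_eq_on_generated_subrack:
  assumes "rack C c" "rack R r" "rack_hom C c R r h" "rack_hom C c R r h'"
    and "G \<subseteq> C" "\<forall>x\<in>G. h x = h' x" "x \<in> generated_subrack C c G"
  shows "h x = h' x"
proof -
  have "generated_subrack C c G \<subseteq> {x \<in> C. h x = h' x}"
    unfolding generated_subrack_def
    by (rule Inter_lower) (use rack_hom_equalizer_subrack[OF assms(1-4)] assms(5,6) in blast)
  then show ?thesis using assms(7) by blast
qed

lemma finite_rack_Mor:
  assumes "rack C c" "finitely_generated_rack C c" "rack R r" "finite R"
  shows "finite (rack_Mor C c R r)"
proof -
  obtain G where G: "finite G" "G \<subseteq> C" "generated_subrack C c G = C"
    using assms(2) unfolding finitely_generated_rack_def by blast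
  have "inj_on (\<lambda>h. restrict h G) (rack_Mor C c R r)"
  proof (rule inj_onI)
    fix h h' assume h: "h \<in> rack_Mor C c R r" "h' \<in> rack_Mor C c R r"
      and "restrict h G = restrict h' G"
    then have "\<forall>x\<in>G. h x = h' x" by (metis restrict_apply')
    then have "h x = h' x" if "x \<in> C" for x
      using h that G(3) rack_hom_eq_on_generated_subrack[OF assms(1,3) _ _ G(2)]
      unfolding rack_Mor_iff by simp
    then show "h = h'" using h unfolding rack_Mor_iff by (meson extensionalityI)
  qed
  moreover have "finite ((\<lambda>h. restrict h G) ` rack_Mor C c R r)"
  proof (rule finite_subset)
    show "(\<lambda>h. restrict h G) ` rack_Mor C c R r \<subseteq> G \<rightarrow>\<^sub>E R"
      using G(2) unfolding rack_Mor_def by auto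
    show "finite (G \<rightarrow>\<^sub>E R)" using G(1) assms(4) by (rule finite_PiE)
  qed
  ultimately show ?thesis by (rule finite_imageD[rotated])
qed

lemma num_mor_decomposition:
  assumes "connected_rack C c" "finitely_generated_rack C c" "rack R r" "finite R"
    and "rack_decomposition R r S T"
  shows "num_mor C c R r = num_mor C c S r + num_mor C c T r"
proof -
  have "rack C c" "C \<noteq> {}" using assms(1) unfolding connected_rack_def by auto
  have union: "rack_Mor C c R r = rack_Mor C c S r \<union> rack_Mor C c T r"
    using rack_Mor_decomposition[OF assms(1,3,5)] .
  have "finite (rack_Mor C c R r)"
    using finite_rack_Mor[OF \<open>rack C c\<close> assms(2-4)] .
  then have "finite (rack_Mor C c S r)" "finite (rack_Mor C c T r)" unfolding union by auto
  moreover have "rack_Mor C c S r \<inter> rack_Mor C c T r = {}"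
    using assms(5) unfolding rack_decomposition_def by (intro rack_Mor_disjoint[OF \<open>C \<noteq> {}\<close>]) auto
  ultimately show ?thesis unfolding num_mor_def union by (simp add: card_Un_disjoint)
qed

lemma rack_hom_inv_into:
  assumes "rack A r" "bij_betw f A B" "rack_hom A r B s f"
  shows "rack_hom B s A r (inv_into A f)"
  unfolding rack_hom_def
proof (intro conjI ballI)
  show "inv_into A f \<in> B \<rightarrow> A"
    using assms(2) by (metis bij_betw_imp_funcset bij_betw_inv_into)
next
  fix a b assume "a \<in> B" "b \<in> B"
  then have ab: "inv_into A f a \<in> A" "inv_into A f b \<in> A" "f (inv_into A f a) = a" "f (inv_into A f b) = b"
    using assms(2) by (auto intro: bij_betw_apply[OF bij_betw_inv_into] bij_betw_inv_into_right)
  then have "f (r (inv_into A f a) (inv_into A f b)) = s a b"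
    using assms(3) unfolding rack_hom_def by metis
  then show "inv_into A f (s a b) = r (inv_into A f a) (inv_into A f b)"
    using bij_betw_inv_into_left[OF assms(2) rack_closed[OF assms(1) ab(1,2)]] by simp
qed

lemma rack_Mor_postcompose:
  assumes "rack C c" "h \<in> rack_Mor C c A r" "rack_hom A r B s f"
  shows "restrict (f \<circ> h) C \<in> rack_Mor C c B s"
  using assms restrict_rack_hom[OF assms(1) rack_hom_comp] unfolding rack_Mor_iff by blast

lemma bij_betw_rack_Mor_postcompose:
  assumes "rack C c" "rack A r" "bij_betw f A B" "rack_hom A r B s f"
  shows "bij_betw (\<lambda>h. restrict (f \<circ> h) C) (rack_Mor C c A r) (rack_Mor C c B s)"
proof (rule bij_betw_byWitness[where f' = "\<lambda>h. restrict (inv_into A f \<circ> h) C"])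
  show "\<forall>h\<in>rack_Mor C c A r. restrict (inv_into A f \<circ> restrict (f \<circ> h) C) C = h"
    using assms(3) by (auto simp: rack_Mor_def bij_betw_inv_into_left PiE_iff intro!: extensionalityI[where A = C])
  show "\<forall>h\<in>rack_Mor C c B s. restrict (f \<circ> restrict (inv_into A f \<circ> h) C) C = h"
    using assms(3) by (auto simp: rack_Mor_def bij_betw_inv_into_right PiE_iff intro!: extensionalityI[where A = C])
  show "(\<lambda>h. restrict (f \<circ> h) C) ` rack_Mor C c A r \<subseteq> rack_Mor C c B s"
    using rack_Mor_postcompose[OF assms(1) _ assms(4)] by blast
  show "(\<lambda>h. restrict (inv_into A f \<circ> h) C) ` rack_Mor C c B s \<subseteq> rack_Mor C c A r"
    using rack_Mor_postcompose[OF assms(1) _ rack_hom_inv_into[OF assms(2-4)]] by blast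
qed

lemma num_mor_rack_iso:
  assumes "rack C c" "rack A r" "rack_iso A r B s"
  shows "num_mor C c A r = num_mor C c B s"
proof -
  obtain f where "bij_betw f A B" "rack_hom A r B s f"
    using assms(3) unfolding rack_iso_def by blast
  then show ?thesis
    using bij_betw_same_card[OF bij_betw_rack_Mor_postcompose[OF assms(1,2)]]
    unfolding num_mor_def by metis
qed

lemma prod_rack_op_apply:
  "prod_rack_op r s p q = (r (fst p) (fst q), s (snd p) (snd q))"
  by (simp add: prod_rack_op_def split_beta)

lemma rack_hom_prod_iff:
  "rack_hom C c (A \<times> B) (prod_rack_op r s) h \<longleftrightarrow>
     rack_hom C c A r (fst \<circ> h) \<and> rack_hom C c B s (snd \<circ> h)"
  unfolding rack_hom_def prod_rack_op_apply by (auto simp: Pi_iff mem_Times_iff prod_eq_iff)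

lemma bij_betw_rack_Mor_prod:
  assumes "rack C c"
  shows "bij_betw (\<lambda>h. (restrict (fst \<circ> h) C, restrict (snd \<circ> h) C))
           (rack_Mor C c (A \<times> B) (prod_rack_op r s)) (rack_Mor C c A r \<times> rack_Mor C c B s)"
proof (rule bij_betw_byWitness[where f' = "\<lambda>(f, g). restrict (\<lambda>x. (f x, g x)) C"])
  show "\<forall>h\<in>rack_Mor C c (A \<times> B) (prod_rack_op r s).
      (\<lambda>(f, g). restrict (\<lambda>x. (f x, g x)) C) (restrict (fst \<circ> h) C, restrict (snd \<circ> h) C) = h"
    by (auto simp: rack_Mor_def PiE_iff intro!: extensionalityI[where A = C])
  show "\<forall>p\<in>rack_Mor C c A r \<times> rack_Mor C c B s.
      (\<lambda>h. (restrict (fst \<circ> h) C, restrict (snd \<circ> h) C)) ((\<lambda>(f, g). restrict (\<lambda>x. (f x, g x)) C) p) = p"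
    by (auto simp: rack_Mor_def PiE_iff intro!: extensionalityI[where A = C])
  show "(\<lambda>h. (restrict (fst \<circ> h) C, restrict (snd \<circ> h) C)) ` rack_Mor C c (A \<times> B) (prod_rack_op r s)
      \<subseteq> rack_Mor C c A r \<times> rack_Mor C c B s"
    by (auto simp: rack_Mor_iff rack_hom_prod_iff intro: restrict_rack_hom[OF assms])
  have "rack_hom C c (A \<times> B) (prod_rack_op r s) (\<lambda>x\<in>C. (f x, g x))"
    if "rack_hom C c A r f" "rack_hom C c B s g" for f g
  proof -
    have "rack_hom C c (A \<times> B) (prod_rack_op r s) (\<lambda>x. (f x, g x))"
      using that unfolding rack_hom_prod_iff by (simp add: comp_def)
    then show ?thesis by (rule restrict_rack_hom[OF assms])
  qed
  then show "(\<lambda>(f, g). restrict (\<lambda>x. (f x, g x)) C) ` (rack_Mor C c A r \<times> rack_Mor C c B s)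
      \<subseteq> rack_Mor C c (A \<times> B) (prod_rack_op r s)"
    by (auto simp: rack_Mor_iff)
qed

lemma num_mor_prod:
  assumes "rack C c"
  shows "num_mor C c (A \<times> B) (prod_rack_op r s) = num_mor C c A r * num_mor C c B s"
proof -
  have "card (rack_Mor C c (A \<times> B) (prod_rack_op r s)) = card (rack_Mor C c A r \<times> rack_Mor C c B s)"
    using bij_betw_rack_Mor_prod[OF assms] by (rule bij_betw_same_card)
  then show ?thesis unfolding num_mor_def by (simp add: card_cartesian_product)
qed

lemma rack_Mor_singleton:
  assumes "rack C c"
  shows "rack_Mor C c {x} (\<lambda>_ _. x) = {\<lambda>_\<in>C. x}"
proof -
  have "rack_Mor C c {x} (\<lambda>_ _. x) = C \<rightarrow>\<^sub>E {x}"
    using rack_closed[OF assms] unfolding rack_Mor_def rack_hom_def by auto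
  then show ?thesis using PiE_eq_singleton[of C "\<lambda>_. {x}" "\<lambda>_. x"] by simp
qed

theorem proposition5p1:
  fixes C :: "'a set" and c :: "'a \<Rightarrow> 'a \<Rightarrow> 'a"
  assumes "rack C c" and "connected_rack C c" and "finitely_generated_rack C c"
  shows
    \<comment> \<open>additive invariant: isomorphism invariance\<close>
    "(\<forall>(R1 :: 'b set) r1 (R2 :: 'c set) r2.
        finite R1 \<and> rack R1 r1 \<and> finite R2 \<and> rack R2 r2 \<and> rack_iso R1 r1 R2 r2 \<longrightarrow>
        num_mor C c R1 r1 = num_mor C c R2 r2)
   \<and> \<comment> \<open>additive invariant: additivity on decompositions\<close>
     (\<forall>(R :: 'b set) r S T.
        finite R \<and> rack R r \<and> rack_decomposition R r S T \<longrightarrow>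
        num_mor C c R r = num_mor C c S r + num_mor C c T r)
   \<and> \<comment> \<open>induced map preserves products\<close>
     (\<forall>(R :: 'b set) r (R' :: 'c set) r'.
        finite R \<and> rack R r \<and> finite R' \<and> rack R' r' \<longrightarrow>
        num_mor C c (R \<times> R') (prod_rack_op r r') = num_mor C c R r * num_mor C c R' r')
   \<and> \<comment> \<open>induced map preserves the unit (class of the singleton rack)\<close>
     (\<forall>x :: 'd. num_mor C c {x} (\<lambda>_ _. x) = 1)"
proof (intro conjI allI impI)
  fix R1 :: "'b set" and r1 and R2 :: "'c set" and r2
  assume "finite R1 \<and> rack R1 r1 \<and> finite R2 \<and> rack R2 r2 \<and> rack_iso R1 r1 R2 r2"
  then show "num_mor C c R1 r1 = num_mor C c R2 r2"
    using num_mor_rack_iso[OF assms(1)] by blast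
next
  fix R :: "'b set" and r S T
  assume "finite R \<and> rack R r \<and> rack_decomposition R r S T"
  then show "num_mor C c R r = num_mor C c S r + num_mor C c T r"
    using num_mor_decomposition[OF assms(2,3)] by blast
next
  fix R :: "'b set" and r and R' :: "'c set" and r'
  show "num_mor C c (R \<times> R') (prod_rack_op r r') = num_mor C c R r * num_mor C c R' r'"
    by (rule num_mor_prod[OF assms(1)])
next
  fix x :: 'd
  show "num_mor C c {x} (\<lambda>_ _. x) = 1"
    unfolding num_mor_def rack_Mor_singleton[OF assms(1)] by simp
qed

end
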